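(* Let $N,\beta,\sigma,\gamma,\xi,\eta,D,R,\mathbf{q},\mathbf{p},C,\mathbf{y}_0$ be as follows: $N\ge1$ integer, $\beta,\sigma,\gamma,\xi,\eta,D,R>0$; for $\mathbf{y}=(\mathbf{V}_1,\dots,\mathbf{V}_N,\mathbf{X}_1,\dots,\mathbf{X}_N)\in\mathbb{R}^{4N}$, $\mathbf{q}(\mathbf{y})=(\mathbf{q}_1,\mathbf{q}_2)$ with $q_{1,ik}=\frac{\beta}{N}\sum_{j}\frac{V_{jk}-V_{ik}}{(1+\|\mathbf{X}_j-\mathbf{X}_i\|^2/R^2)^{\sigma}}$, $q_{2,ik}=V_{ik}$ ($k=1,2$); for $r>0$, $\mathbf{p}(r,\mathbf{y},\mathbf{z})=(\mathbf{p}_1,0)$ with $p_{1,i1}=\sum_{j}\int_{-R}^{R}e^{-\frac{(X_{i2}-Z_{j2}-w)^2}{4rD}}\big(e^{-\frac{(X_{i1}-Z_{j1}-\sqrt{R^2-w^2})^2}{4rD}}-e^{-\frac{(X_{i1}-Z_{j1}+\sqrt{R^2-w^2})^2}{4rD}}\big)dw$ and $p_{1,i2}$ defined likewise with the indices $1$ and $2$ of the position components interchanged (here $X_{ik}$, $Z_{ik}$ are the position components of $\mathbf{y}$, $\mathbf{z}$); $C(r)=\frac{\gamma\xi e^{-\eta r}}{4\pi rD}$; $\mathbf{y}_0\in\mathbb{R}^{4N}$. Consider $$\mathbf{y}(t)=\mathbf{y}_0+\int_0^t\Big[\mathbf{q}(\mathbf{y}(\tau))+\int_\tau^t C(s-\tau)\,\mathbf{p}(s-\tau,\mathbf{y}(s),\mathbf{y}(\tau))\,ds\Big]d\tau.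 \tag{E}$$ Let $\mathbf{y}(t)$ be a solution of (E) on an interval $[0,T)$. If there is a constant $P$ with $\|\mathbf{y}(t)-\mathbf{y}_0\|\le P$ for all $t\in[0,T)$, then there is $\bar T>T$ such that $\mathbf{y}$ can be continued to a solution of (E) on $[0,\bar T]$.
   Context: Equation (E) is the integrated form of a hybrid model of $N$ particles in $\mathbb{R}^2$ with Cucker–Smale alignment and chemotaxis towards a diffusing, degrading signal produced on discs of radius $R$ around the particles (initially zero). $\|\cdot\|$ is the Euclidean norm. *)

theory Defs
  imports "HOL-Analysis.Analysis"
begin

text \<open>State y = (V, X) with V = (V_1,...,V_N), X = (X_1,...,X_N), each V_i, X_i in R^2.
  Particles are indexed by a finite type 'n, so N = CARD('n) >= 1.  The norm on
  the product type is sqrt(norm V ^ 2 + norm X ^ 2), i.e. the Euclidean norm of R^(4N).\<close>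

type_synonym 'n state = "(real^2^'n) \<times> (real^2^'n)"

definition qE :: "real \<Rightarrow> real \<Rightarrow> real \<Rightarrow> 'n::finite state \<Rightarrow> 'n state" where
  "qE \<beta> \<sigma> R y =
     ((\<chi> i. (\<beta> / real CARD('n)) *\<^sub>R
          (\<Sum>j\<in>UNIV. (1 / (1 + (norm (snd y $ j - snd y $ i))^2 / R^2) powr \<sigma>)
                        *\<^sub>R (fst y $ j - fst y $ i))),
      fst y)"

definition pcomp :: "real \<Rightarrow> real \<Rightarrow> real \<Rightarrow> real \<Rightarrow> real \<Rightarrow> real" where
  "pcomp D R r a b = integral {-R..R} (\<lambda>w.
      exp (- ((b - w)^2 / (4 * r * D))) *
      (exp (- ((a - sqrt (R^2 - w^2))^2 / (4 * r * D)))
       - exp (- ((a + sqrt (R^2 - w^2))^2 / (4 * r * D)))))"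

definition pE :: "real \<Rightarrow> real \<Rightarrow> real \<Rightarrow> 'n::finite state \<Rightarrow> 'n state \<Rightarrow> 'n state" where
  "pE D R r y z =
     ((\<chi> i. \<chi> k. \<Sum>j\<in>UNIV.
         (if k = 1 then pcomp D R r ((snd y $ i - snd z $ j) $ 1) ((snd y $ i - snd z $ j) $ 2)
          else pcomp D R r ((snd y $ i - snd z $ j) $ 2) ((snd y $ i - snd z $ j) $ 1))),
      0)"

definition CE :: "real \<Rightarrow> real \<Rightarrow> real \<Rightarrow> real \<Rightarrow> real \<Rightarrow> real" where
  "CE \<gamma> \<xi> \<eta> D r = \<gamma> * \<xi> * exp (- \<eta> * r) / (4 * pi * r * D)"

definition solves_E ::
  "real \<Rightarrow> real \<Rightarrow> real \<Rightarrow> real \<Rightarrow> real \<Rightarrow> real \<Rightarrow> real \<Rightarrow>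
   'n::finite state \<Rightarrow> (real \<Rightarrow> 'n state) \<Rightarrow> real set \<Rightarrow> bool" where
  "solves_E \<beta> \<sigma> \<gamma> \<xi> \<eta> D R y0 y I \<longleftrightarrow>
     continuous_on I y \<and>
     (\<forall>t\<in>I.
        (\<forall>\<tau>\<in>{0..t}. (\<lambda>s. CE \<gamma> \<xi> \<eta> D (s - \<tau>) *\<^sub>R pE D R (s - \<tau>) (y s) (y \<tau>))
                        integrable_on {\<tau>..t}) \<and>
        ((\<lambda>\<tau>. qE \<beta> \<sigma> R (y \<tau>) +
               integral {\<tau>..t} (\<lambda>s. CE \<gamma> \<xi> \<eta> D (s - \<tau>) *\<^sub>R pE D R (s - \<tau>) (y s) (y \<tau>)))
          has_integral (y t - y0)) {0..t})"

end

theory Submission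
  imports Defs "HOL-Complex_Analysis.Great_Picard"
begin

text \<open>Equation (E) has the form \<open>y t = y0 + \<integral>\<^sub>0\<^sup>t (q (y \<tau>) + \<integral>\<^sub>\<tau>\<^sup>t K (s - \<tau>) (y s) (y \<tau>) ds) d\<tau>\<close>
  with \<open>q\<close> continuous and a continuous kernel with a weak singularity,
  \<open>norm (K r x z) \<le> M / sqrt r\<close>: the heat kernel integrated over the circle of radius \<open>R\<close> is
  bounded by a Lorentzian, whose integral is \<open>pi sqrt (4 r D)\<close>, and \<open>C r\<close> turns this into a bound
  of order \<open>1 / sqrt r\<close>.  For such equations the right-hand side \<open>\<Phi> w\<close> has the modulus of
  continuity \<open>A d + B sqrt d\<close> uniformly over all \<open>w\<close> with values in a fixed compact set.  Hence a
  bounded solution on \<open>[0, T)\<close> is uniformly continuous and extends continuously to \<open>T\<close>.  A solution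
  beyond \<open>T\<close> is then obtained by Peano's method: the retarded equations
  \<open>v t = \<Phi> v (max (min t T) (t - \<delta>))\<close> are solved step by step, and by Arzela--Ascoli a
  subsequence of their solutions converges, as \<open>\<delta> \<rightarrow> 0\<close>, to a solution on \<open>[0, T + h]\<close>.\<close>

lemma has_integral_const_div_sqrt:
  fixes a b M :: real
  assumes "a \<le> b"
  shows "((\<lambda>s. M / sqrt (s - a)) has_integral 2 * M * sqrt (b - a)) {a..b}"
proof -
  have "((\<lambda>s. M / sqrt (s - a)) has_integral (2 * M * sqrt (b - a) - 2 * M * sqrt (a - a))) {a..b}"
  proof (rule fundamental_theorem_of_calculus_interior[OF assms])
    show "continuous_on {a..b} (\<lambda>s. 2 * M * sqrt (s - a))" by (intro continuous_intros)
    fix x assume "x \<in> {a<..<b}"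
    then have "((\<lambda>s. 2 * M * sqrt (s - a)) has_real_derivative 2 * M * (inverse (sqrt (x - a)) / 2 * 1)) (at x)"
      by (auto intro!: derivative_eq_intros)
    then show "((\<lambda>s. 2 * M * sqrt (s - a)) has_vector_derivative M / sqrt (x - a)) (at x)"
      by (simp add: has_real_derivative_iff_has_vector_derivative[symmetric] field_simps)
  qed
  then show ?thesis by simp
qed

lemma integrable_const_div_sqrt: "a \<le> b \<Longrightarrow> (\<lambda>s. M / sqrt (s - a)) integrable_on {a..b}"
  using has_integral_const_div_sqrt by blast

definition sqrt_modulus :: "real \<Rightarrow> real \<Rightarrow> real \<Rightarrow> real" where
  "sqrt_modulus A B d = A * d + B * sqrt d"

lemma sqrt_modulus_mono:
  "0 \<le> A \<Longrightarrow> 0 \<le> B \<Longrightarrow> 0 \<le> d \<Longrightarrow> d \<le> d' \<Longrightarrow> sqrt_modulus A B d \<le> sqrt_modulus A B d'"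
  unfolding sqrt_modulus_def by (intro add_mono mult_left_mono) auto

lemma sqrt_modulus_mono_coeffs:
  "A \<le> A' \<Longrightarrow> B \<le> B' \<Longrightarrow> 0 \<le> d \<Longrightarrow> sqrt_modulus A B d \<le> sqrt_modulus A' B' d"
  unfolding sqrt_modulus_def by (intro add_mono mult_right_mono) auto

lemma tendsto_sqrt_modulus_zero: "(f \<longlongrightarrow> 0) F \<Longrightarrow> ((\<lambda>x. sqrt_modulus A B (f x)) \<longlongrightarrow> 0) F"
  using tendsto_add[OF tendsto_mult_right_zero[of f F A] tendsto_mult_right_zero[of "\<lambda>x. sqrt (f x)" F B]]
  by (simp add: sqrt_modulus_def tendsto_real_sqrt[of f 0 F, simplified])

lemma sqrt_modulus_small:
  assumes "e > 0"
  obtains d where "d > 0" "\<And>x. 0 \<le> x \<Longrightarrow> x < d \<Longrightarrow> sqrt_modulus A B x < e"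
proof -
  have "eventually (\<lambda>x. sqrt_modulus A B x < e) (at_right 0)"
    using order_tendstoD(2)[OF tendsto_sqrt_modulus_zero[OF tendsto_ident_at] assms] .
  then obtain d where d: "d > 0" "\<And>x. 0 < x \<Longrightarrow> x < d \<Longrightarrow> sqrt_modulus A B x < e"
    by (auto simp: eventually_at_right_field)
  have "sqrt_modulus A B 0 < e" using assms by (simp add: sqrt_modulus_def)
  with d show ?thesis by (metis order_le_less that)
qed

lemma uniformly_continuous_on_sqrt_modulus:
  fixes f :: "real \<Rightarrow> 'a::real_normed_vector"
  assumes "\<And>t1 t2. t1 \<in> S \<Longrightarrow> t2 \<in> S \<Longrightarrow> t1 \<le> t2 \<Longrightarrow> norm (f t2 - f t1) \<le> sqrt_modulus A B (t2 - t1)"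
  shows "uniformly_continuous_on S f"
  unfolding uniformly_continuous_on_def
proof (intro allI impI)
  fix e :: real assume "e > 0"
  then obtain d where d: "d > 0" "\<And>x. 0 \<le> x \<Longrightarrow> x < d \<Longrightarrow> sqrt_modulus A B x < e"
    using sqrt_modulus_small by blast
  have "dist (f x') (f x) < e" if "x \<in> S" "x' \<in> S" "dist x' x < d" for x x'
  proof (cases "x \<le> x'")
    case True
    then show ?thesis using assms[of x x'] d(2)[of "x' - x"] that by (auto simp: dist_norm)
  next
    case False
    then show ?thesis using assms[of x' x] d(2)[of "x - x'"] that
      by (auto simp: dist_norm norm_minus_commute)
  qed
  with d(1) show "\<exists>d>0. \<forall>x\<in>S. \<forall>x'\<in>S. dist x' x < d \<longrightarrow> dist (f x') (f x) < e" by blast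
qed

section \<open>Volterra equations with a weakly singular kernel\<close>

locale weakly_singular_volterra =
  fixes q :: "'a::euclidean_space \<Rightarrow> 'a" and K :: "real \<Rightarrow> 'a \<Rightarrow> 'a \<Rightarrow> 'a" and M :: real
  assumes continuous_q: "continuous_on UNIV q"
    and continuous_K: "continuous_on ({0<..} \<times> UNIV) (\<lambda>(r, x, z). K r x z)"
    and norm_K_le: "\<And>r x z. r \<ge> 0 \<Longrightarrow> norm (K r x z) \<le> M / sqrt r"
    and M_nonneg: "M \<ge> 0"
begin

definition inner_integral :: "(real \<Rightarrow> 'a) \<Rightarrow> real \<Rightarrow> real \<Rightarrow> 'a" where
  "inner_integral w \<tau> t = integral {\<tau>..t} (\<lambda>s. K (s - \<tau>) (w s) (w \<tau>))"

definition volterra_map :: "'a \<Rightarrow> (real \<Rightarrow> 'a) \<Rightarrow> real \<Rightarrow> 'a" where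
  "volterra_map y0 w t = y0 + integral {0..t} (\<lambda>\<tau>. q (w \<tau>) + inner_integral w \<tau> t)"

definition solves :: "'a \<Rightarrow> (real \<Rightarrow> 'a) \<Rightarrow> real set \<Rightarrow> bool" where
  "solves y0 y J \<longleftrightarrow> continuous_on J y \<and>
     (\<forall>t\<in>J. (\<forall>\<tau>\<in>{0..t}. (\<lambda>s. K (s - \<tau>) (y s) (y \<tau>)) integrable_on {\<tau>..t}) \<and>
        ((\<lambda>\<tau>. q (y \<tau>) + integral {\<tau>..t} (\<lambda>s. K (s - \<tau>) (y s) (y \<tau>))) has_integral (y t - y0)) {0..t})"

text \<open>At \<open>r = 0\<close> the bound reads \<open>norm (K 0 x z) \<le> M / 0 = 0\<close>.\<close>

lemma K_zero: "K 0 x z = 0"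
  using norm_K_le[of 0 x z] by simp

lemma tendsto_K:
  assumes "r > 0" "(X \<longlongrightarrow> x) F" "(Z \<longlongrightarrow> z) F"
  shows "((\<lambda>n. K r (X n) (Z n)) \<longlongrightarrow> K r x z) F"
proof -
  have "open ({0::real<..} \<times> (UNIV :: ('a \<times> 'a) set))" by (intro open_Times open_greaterThan open_UNIV)
  then have "isCont (\<lambda>(r, x, z). K r x z) (r, x, z)"
    using continuous_K assms(1) by (auto simp: continuous_on_eq_continuous_at)
  then have "((\<lambda>n. (\<lambda>(r, x, z). K r x z) (r, X n, Z n)) \<longlongrightarrow> (\<lambda>(r, x, z). K r x z) (r, x, z)) F"
    by (rule isCont_tendsto_compose) (use assms in \<open>auto intro!: tendsto_intros\<close>)
  then show ?thesis by simp
qed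

lemma continuous_on_K_comp:
  assumes "continuous_on S r" "continuous_on S x" "continuous_on S z" "\<And>s. s \<in> S \<Longrightarrow> r s > 0"
  shows "continuous_on S (\<lambda>s. K (r s) (x s) (z s))"
proof -
  have "continuous_on S (\<lambda>s. (\<lambda>(r, x, z). K r x z) (r s, x s, z s))"
    by (rule continuous_on_compose2[OF continuous_K]) (use assms in \<open>auto intro!: continuous_intros\<close>)
  then show ?thesis by simp
qed

lemma integrable_kernel:
  assumes w: "continuous_on {\<tau>..t} w" and "\<tau> \<le> t"
  shows "(\<lambda>s. K (s - \<tau>) (w s) (w \<tau>)) integrable_on {\<tau>..t}"
proof -
  have "(\<lambda>s. K (s - \<tau>) (w s) (w \<tau>)) integrable_on {\<tau><..<t}"
  proof (rule measurable_bounded_by_integrable_imp_integrable)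
    have "continuous_on {\<tau><..<t} (\<lambda>s. K (s - \<tau>) (w s) (w \<tau>))"
      by (rule continuous_on_K_comp) (use w in \<open>auto intro!: continuous_intros intro: continuous_on_subset\<close>)
    then show "(\<lambda>s. K (s - \<tau>) (w s) (w \<tau>)) \<in> borel_measurable (lebesgue_on {\<tau><..<t})"
      by (rule continuous_imp_measurable_on_sets_lebesgue) auto
    show "(\<lambda>s. M / sqrt (s - \<tau>)) integrable_on {\<tau><..<t}"
      using integrable_const_div_sqrt[OF \<open>\<tau> \<le> t\<close>] by (simp add: integrable_on_open_interval_real)
    show "norm (K (s - \<tau>) (w s) (w \<tau>)) \<le> M / sqrt (s - \<tau>)" if "s \<in> {\<tau><..<t}" for s
      using norm_K_le that by auto
  qed auto
  then show ?thesis by (simp add: integrable_on_open_interval_real)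
qed

lemma norm_integral_kernel_le:
  assumes w: "continuous_on {\<tau>..b} w" and "\<tau> \<le> a" "a \<le> b"
  shows "norm (integral {a..b} (\<lambda>s. K (s - \<tau>) (w s) (w \<tau>))) \<le> 2 * M * sqrt (b - a)"
proof -
  have "(\<lambda>s. K (s - \<tau>) (w s) (w \<tau>)) integrable_on {a..b}"
    using integrable_kernel[OF w] assms by (auto intro: integrable_on_subinterval)
  moreover have "norm (K (s - \<tau>) (w s) (w \<tau>)) \<le> M / sqrt (s - a)" if "s \<in> {a<..<b}" for s
  proof -
    have "norm (K (s - \<tau>) (w s) (w \<tau>)) \<le> M / sqrt (s - \<tau>)" using norm_K_le that assms by auto
    also have "\<dots> \<le> M / sqrt (s - a)"
      using that assms M_nonneg by (auto intro!: divide_left_mono mult_pos_pos)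
    finally show ?thesis .
  qed
  ultimately have "norm (integral {a<..<b} (\<lambda>s. K (s - \<tau>) (w s) (w \<tau>)))
      \<le> integral {a<..<b} (\<lambda>s. M / sqrt (s - a))"
    using integrable_const_div_sqrt[OF \<open>a \<le> b\<close>, of M]
    by (intro integral_norm_bound_integral) (simp_all add: integrable_on_open_interval_real)
  then show ?thesis
    using integral_unique[OF has_integral_const_div_sqrt[OF \<open>a \<le> b\<close>]]
    by (simp flip: integral_open_interval_real)
qed

definition shifted_kernel :: "(real \<Rightarrow> 'a) \<Rightarrow> real \<Rightarrow> real \<Rightarrow> real \<Rightarrow> 'a" where
  "shifted_kernel w t \<tau> r = (if r \<in> {0..t - \<tau>} then K r (w (\<tau> + r)) (w \<tau>) else 0)"

lemma inner_integral_shift: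
  assumes "0 \<le> \<tau>" "\<tau> \<le> t"
  shows "inner_integral w \<tau> t = integral {0..t} (shifted_kernel w t \<tau>)"
proof -
  have "inner_integral w \<tau> t = integral {0..t-\<tau>} (\<lambda>r. K r (w (\<tau> + r)) (w \<tau>))"
    using integral_shift_Icc_real[of 0 "t - \<tau>" "\<lambda>s. K (s - \<tau>) (w s) (w \<tau>)" \<tau>]
    by (simp add: inner_integral_def o_def)
  also have "\<dots> = integral {0..t} (shifted_kernel w t \<tau>)"
    using integral_restrict_Int[of "{0..t}" "{0..t-\<tau>}" "\<lambda>r. K r (w (\<tau> + r)) (w \<tau>)"] assms
    by (simp add: Int_absorb2 shifted_kernel_def[abs_def])
  finally show ?thesis .
qed

lemma integrable_shifted_kernel:
  assumes w: "continuous_on {0..t} w" and "0 \<le> \<tau>" "\<tau> \<le> t"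
  shows "shifted_kernel w t \<tau> integrable_on {0..t}"
proof -
  have "(\<lambda>s. K (s - \<tau>) (w s) (w \<tau>)) integrable_on {\<tau>..t}"
    by (rule integrable_kernel) (use w assms in \<open>auto intro: continuous_on_subset\<close>)
  then have "(\<lambda>r. K r (w (\<tau> + r)) (w \<tau>)) integrable_on ({0..t-\<tau>} \<inter> {0..t})"
    using integrable_on_shift_Icc_real[of "\<lambda>s. K (s - \<tau>) (w s) (w \<tau>)" \<tau> 0 "t-\<tau>"] assms
    by (simp add: o_def Int_absorb2)
  then show ?thesis
    using integrable_restrict_Int[of "{0..t-\<tau>}" "\<lambda>r. K r (w (\<tau> + r)) (w \<tau>)" "{0..t}"]
    by (simp add: shifted_kernel_def[abs_def])
qed

lemma norm_shifted_kernel_le: "r \<in> {0..t} \<Longrightarrow> norm (shifted_kernel w t \<tau> r) \<le> M / sqrt r"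
  using norm_K_le[of r] M_nonneg unfolding shifted_kernel_def by auto

text \<open>The jump of the cut-off at \<open>r = t - a\<close> is the only obstruction to convergence.\<close>

lemma tendsto_shifted_kernel:
  assumes w: "continuous_on {0..t} w" and u: "\<forall>n. u n \<in> {0..t}" "u \<longlonglongrightarrow> a" and a: "a \<in> {0..t}"
    and r: "r \<in> {0..t}" "r \<noteq> t - a"
  shows "(\<lambda>n. shifted_kernel w t (u n) r) \<longlonglongrightarrow> shifted_kernel w t a r"
proof (cases "r < t - a")
  case True
  then have ev: "eventually (\<lambda>n. r < t - u n) sequentially"
    using u by (auto intro!: order_tendstoD tendsto_intros)
  have "(\<lambda>n. K r (w (u n + r)) (w (u n))) \<longlonglongrightarrow> K r (w (a + r)) (w a)"
  proof (cases "r = 0")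
    case True then show ?thesis by (simp add: K_zero)
  next
    case False
    then have rpos: "r > 0" using r by auto
    have c1: "continuous (at (a + r) within {0..t}) w"
      using w a True r by (auto simp: continuous_on_eq_continuous_within)
    have c2: "continuous (at a within {0..t}) w"
      using w a by (auto simp: continuous_on_eq_continuous_within)
    show ?thesis
    proof (rule tendsto_K[OF rpos])
      show "(\<lambda>n. w (u n + r)) \<longlonglongrightarrow> w (a + r)"
        by (rule continuous_within_tendsto_compose[OF c1])
           (use ev u rpos r in \<open>auto elim!: eventually_mono intro!: tendsto_intros\<close>)
      show "(\<lambda>n. w (u n)) \<longlonglongrightarrow> w a"
        by (rule continuous_within_tendsto_compose'[OF c2 u(1)[rule_format] u(2)])
    qed
  qed
  moreover have "eventually (\<lambda>n. shifted_kernel w t (u n) r = K r (w (u n + r)) (w (u n))) sequentially"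
    using ev r unfolding shifted_kernel_def by (auto elim!: eventually_mono simp: add.commute)
  moreover have "shifted_kernel w t a r = K r (w (a + r)) (w a)"
    using True r unfolding shifted_kernel_def by (auto simp: add.commute)
  ultimately show ?thesis by (simp add: tendsto_cong)
next
  case False
  then have "r > t - a" using r by auto
  then have "eventually (\<lambda>n. r > t - u n) sequentially"
    using u by (auto intro!: order_tendstoD tendsto_intros)
  then have "eventually (\<lambda>n. shifted_kernel w t (u n) r = 0) sequentially"
    unfolding shifted_kernel_def by (auto elim!: eventually_mono)
  moreover have "shifted_kernel w t a r = 0" using \<open>r > t - a\<close> unfolding shifted_kernel_def by auto
  ultimately show ?thesis by (simp add: tendsto_cong)
qed

lemma continuous_on_inner_integral:
  assumes w: "continuous_on {0..t} w"
  shows "continuous_on {0..t} (\<lambda>\<tau>. inner_integral w \<tau> t)"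
proof (rule continuous_on_sequentiallyI)
  fix u a assume u: "\<forall>n. u n \<in> {0..t}" and a: "a \<in> {0..t}" and ua: "u \<longlonglongrightarrow> a"
  define S where "S = {0..t} - {t - a}"
  have negS: "negligible {x \<in> {0..t} - S. f x \<noteq> 0}" "negligible {x \<in> S - {0..t}. f x \<noteq> 0}"
    for f :: "real \<Rightarrow> 'b::zero"
    unfolding S_def by (rule negligible_subset[of "{t-a}"]; auto)+
  have integral_eq: "inner_integral w \<tau> t = integral S (shifted_kernel w t \<tau>)" if "\<tau> \<in> {0..t}" for \<tau>
    using inner_integral_shift[of \<tau> t w] that integral_spike_set[OF negS] by auto
  have integrable: "shifted_kernel w t \<tau> integrable_on S" if "\<tau> \<in> {0..t}" for \<tau>
    using integrable_shifted_kernel[OF w, of \<tau>] that integrable_spike_set[OF _ negS] by auto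
  have t0: "0 \<le> t" using a by simp
  have dominant: "(\<lambda>r. M / sqrt r) integrable_on S"
    using integrable_spike_set[OF integrable_const_div_sqrt[of 0 t M, OF t0] negS] by simp
  have "(\<lambda>n. integral S (shifted_kernel w t (u n))) \<longlonglongrightarrow> integral S (shifted_kernel w t a)"
    using u ua a
    by (intro dominated_convergence(2)[OF integrable[OF u[rule_format]] dominant]
        norm_shifted_kernel_le tendsto_shifted_kernel[OF w]) (auto simp: S_def)
  then show "(\<lambda>n. inner_integral w (u n) t) \<longlonglongrightarrow> inner_integral w a t"
    using integral_eq u a by simp
qed

lemma continuous_on_volterra_integrand:
  assumes "continuous_on {0..t} w"
  shows "continuous_on {0..t} (\<lambda>\<tau>. q (w \<tau>) + inner_integral w \<tau> t)"
  using assms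
  by (intro continuous_on_add continuous_on_inner_integral continuous_on_compose2[OF continuous_q]) auto

lemma integrable_volterra_integrand:
  "continuous_on {0..t} w \<Longrightarrow> (\<lambda>\<tau>. q (w \<tau>) + inner_integral w \<tau> t) integrable_on {0..t}"
  by (rule integrable_continuous_interval[OF continuous_on_volterra_integrand])

lemma norm_volterra_integrand_le:
  assumes w: "continuous_on {0..t} w" and Q: "norm (q (w \<tau>)) \<le> Q"
    and "\<tau> \<in> {0..t}" "t \<le> T"
  shows "norm (q (w \<tau>) + inner_integral w \<tau> t) \<le> Q + 2 * M * sqrt T"
proof -
  have "norm (inner_integral w \<tau> t) \<le> 2 * M * sqrt (t - \<tau>)"
    unfolding inner_integral_def
    by (rule norm_integral_kernel_le) (use w assms in \<open>auto intro: continuous_on_subset\<close>)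
  also have "\<dots> \<le> 2 * M * sqrt T" using assms M_nonneg by (auto intro!: mult_left_mono)
  finally show ?thesis using Q norm_triangle_ineq[of "q (w \<tau>)" "inner_integral w \<tau> t"] by linarith
qed

lemma norm_inner_integral_diff_le:
  assumes w: "continuous_on {\<tau>..t2} w" and "\<tau> \<le> t1" "t1 \<le> t2"
  shows "norm (inner_integral w \<tau> t2 - inner_integral w \<tau> t1) \<le> 2 * M * sqrt (t2 - t1)"
proof -
  have "integral {\<tau>..t2} (\<lambda>s. K (s - \<tau>) (w s) (w \<tau>))
      = integral {\<tau>..t1} (\<lambda>s. K (s - \<tau>) (w s) (w \<tau>)) + integral {t1..t2} (\<lambda>s. K (s - \<tau>) (w s) (w \<tau>))"
    using assms integrable_kernel[OF w]
    by (intro Henstock_Kurzweil_Integration.integral_combine[symmetric]) auto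
  then show ?thesis
    using norm_integral_kernel_le[OF w assms(2,3)] assms
    unfolding inner_integral_def by (simp add: algebra_simps)
qed

lemma volterra_map_modulus:
  assumes w: "continuous_on {0..T} w" and Q: "\<And>\<tau>. \<tau> \<in> {0..T} \<Longrightarrow> norm (q (w \<tau>)) \<le> Q"
    and t: "0 \<le> t1" "t1 \<le> t2" "t2 \<le> T"
  shows "norm (volterra_map y0 w t2 - volterra_map y0 w t1)
    \<le> sqrt_modulus (Q + 2 * M * sqrt T) (2 * M * T) (t2 - t1)"
proof -
  define F where "F t \<tau> = q (w \<tau>) + inner_integral w \<tau> t" for t \<tau>
  have w2: "continuous_on {0..t2} w" and w1: "continuous_on {0..t1} w"
    using w t by (auto intro: continuous_on_subset)
  have cont: "continuous_on {0..t} (F t)" if "continuous_on {0..t} w" for t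
    unfolding F_def using that by (rule continuous_on_volterra_integrand)
  have F2: "continuous_on {0..t1} (F t2)" "continuous_on {t1..t2} (F t2)"
    using cont[OF w2] t by (auto intro: continuous_on_subset)
  have "volterra_map y0 w t2 - volterra_map y0 w t1
      = integral {0..t1} (\<lambda>\<tau>. F t2 \<tau> - F t1 \<tau>) + integral {t1..t2} (F t2)"
    using Henstock_Kurzweil_Integration.integral_combine[OF t(1,2) integrable_continuous_interval[OF cont[OF w2]]]
      integral_diff[OF integrable_continuous_interval[OF F2(1)] integrable_continuous_interval[OF cont[OF w1]]]
    unfolding volterra_map_def F_def[symmetric] by simp
  also have "norm \<dots> \<le> (2 * M * sqrt (t2 - t1)) * (t1 - 0) + (Q + 2 * M * sqrt T) * (t2 - t1)"
  proof (rule norm_triangle_le[OF add_mono])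
    show "norm (integral {0..t1} (\<lambda>\<tau>. F t2 \<tau> - F t1 \<tau>)) \<le> (2 * M * sqrt (t2 - t1)) * (t1 - 0)"
    proof (rule integral_bound)
      show "continuous_on {0..t1} (\<lambda>\<tau>. F t2 \<tau> - F t1 \<tau>)"
        by (intro continuous_on_diff F2 cont w1)
      fix \<tau> assume \<tau>: "\<tau> \<in> {0..t1}"
      then have "continuous_on {\<tau>..t2} w" using w t by (auto intro: continuous_on_subset)
      then show "norm (F t2 \<tau> - F t1 \<tau>) \<le> 2 * M * sqrt (t2 - t1)"
        using norm_inner_integral_diff_le[of \<tau> t2 w t1] \<tau> t by (simp add: F_def)
    qed (use t in auto)
    show "norm (integral {t1..t2} (F t2)) \<le> (Q + 2 * M * sqrt T) * (t2 - t1)"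
      using Q t unfolding F_def
      by (intro integral_bound F2[unfolded F_def] norm_volterra_integrand_le[OF w2]) auto
  qed
  also have "\<dots> \<le> sqrt_modulus (Q + 2 * M * sqrt T) (2 * M * T) (t2 - t1)"
    using t M_nonneg mult_right_mono[of t1 T "sqrt (t2 - t1)"]
    unfolding sqrt_modulus_def by (simp add: algebra_simps mult_left_mono)
  finally show ?thesis .
qed

lemma volterra_map_cong:
  assumes "\<And>\<tau>. \<tau> \<in> {0..t} \<Longrightarrow> w1 \<tau> = w2 \<tau>"
  shows "volterra_map y0 w1 t = volterra_map y0 w2 t"
proof -
  have "inner_integral w1 \<tau> t = inner_integral w2 \<tau> t" if "\<tau> \<in> {0..t}" for \<tau>
    unfolding inner_integral_def using assms that by (intro integral_cong) auto
  then show ?thesis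
    unfolding volterra_map_def using assms by (auto intro!: integral_cong arg_cong[where f="(+) y0"])
qed

lemma tendsto_volterra_map:
  assumes wn: "\<And>n. continuous_on {0..t} (w n)" and wl: "continuous_on {0..t} wl"
    and conv: "\<And>\<tau>. \<tau> \<in> {0..t} \<Longrightarrow> (\<lambda>n. w n \<tau>) \<longlonglongrightarrow> wl \<tau>"
    and Q: "\<And>n \<tau>. \<tau> \<in> {0..t} \<Longrightarrow> norm (q (w n \<tau>)) \<le> Q"
  shows "(\<lambda>n. volterra_map y0 (w n) t) \<longlonglongrightarrow> volterra_map y0 wl t"
proof -
  have inner: "(\<lambda>n. inner_integral (w n) \<tau> t) \<longlonglongrightarrow> inner_integral wl \<tau> t" if \<tau>: "\<tau> \<in> {0..t}" for \<tau>
    unfolding inner_integral_def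
  proof (rule dominated_convergence(2))
    show "(\<lambda>s. K (s - \<tau>) (w n s) (w n \<tau>)) integrable_on {\<tau>..t}" for n
      using continuous_on_subset[OF wn[of n], of "{\<tau>..t}"] \<tau> by (intro integrable_kernel) auto
    show "(\<lambda>s. M / sqrt (s - \<tau>)) integrable_on {\<tau>..t}"
      using integrable_const_div_sqrt \<tau> by auto
    show "norm (K (s - \<tau>) (w n s) (w n \<tau>)) \<le> M / sqrt (s - \<tau>)" if "s \<in> {\<tau>..t}" for n s
      using norm_K_le that by auto
    show "(\<lambda>n. K (s - \<tau>) (w n s) (w n \<tau>)) \<longlonglongrightarrow> K (s - \<tau>) (wl s) (wl \<tau>)" if s: "s \<in> {\<tau>..t}" for s
    proof (cases "s = \<tau>")
      case False
      then show ?thesis using s \<tau> by (intro tendsto_K conv) auto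
    qed (simp add: K_zero)
  qed
  have "(\<lambda>n. integral {0..t} (\<lambda>\<tau>. q (w n \<tau>) + inner_integral (w n) \<tau> t))
      \<longlonglongrightarrow> integral {0..t} (\<lambda>\<tau>. q (wl \<tau>) + inner_integral wl \<tau> t)"
  proof (rule dominated_convergence(2))
    show "(\<lambda>\<tau>. q (w n \<tau>) + inner_integral (w n) \<tau> t) integrable_on {0..t}" for n
      by (rule integrable_volterra_integrand[OF wn])
    show "(\<lambda>\<tau>. Q + 2 * M * sqrt t) integrable_on {0..t}" by (rule integrable_const_ivl)
    show "norm (q (w n \<tau>) + inner_integral (w n) \<tau> t) \<le> Q + 2 * M * sqrt t" if "\<tau> \<in> {0..t}" for n \<tau>
      using norm_volterra_integrand_le[OF wn] Q that by auto
    show "(\<lambda>n. q (w n \<tau>) + inner_integral (w n) \<tau> t) \<longlonglongrightarrow> q (wl \<tau>) + inner_integral wl \<tau> t"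
      if "\<tau> \<in> {0..t}" for \<tau>
      using that continuous_q
      by (intro tendsto_add inner isCont_tendsto_compose[of _ q] conv)
         (auto simp: continuous_on_eq_continuous_at)
  qed
  then show ?thesis unfolding volterra_map_def by (intro tendsto_add tendsto_const)
qed

lemma solves_iff_fixed_point:
  assumes "\<And>t. t \<in> J \<Longrightarrow> {0..t} \<subseteq> J"
  shows "solves y0 y J \<longleftrightarrow> continuous_on J y \<and> (\<forall>t\<in>J. y t = volterra_map y0 y t)"
proof
  assume sol: "solves y0 y J"
  have "y t = volterra_map y0 y t" if "t \<in> J" for t
  proof -
    have "((\<lambda>\<tau>. q (y \<tau>) + inner_integral y \<tau> t) has_integral (y t - y0)) {0..t}"
      using sol that unfolding solves_def inner_integral_def by blast
    then show ?thesis unfolding volterra_map_def by (simp add: integral_unique)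
  qed
  then show "continuous_on J y \<and> (\<forall>t\<in>J. y t = volterra_map y0 y t)"
    using sol unfolding solves_def by blast
next
  assume y: "continuous_on J y \<and> (\<forall>t\<in>J. y t = volterra_map y0 y t)"
  have "(\<forall>\<tau>\<in>{0..t}. (\<lambda>s. K (s - \<tau>) (y s) (y \<tau>)) integrable_on {\<tau>..t}) \<and>
        ((\<lambda>\<tau>. q (y \<tau>) + inner_integral y \<tau> t) has_integral (y t - y0)) {0..t}" if t: "t \<in> J" for t
  proof -
    have yt: "continuous_on {0..t} y" using y assms[OF t] by (auto intro: continuous_on_subset)
    then show ?thesis
      using integrable_volterra_integrand[OF yt] y t
      by (auto intro!: integrable_kernel intro: continuous_on_subset simp: volterra_map_def)
  qed
  then show "solves y0 y J" using y unfolding solves_def inner_integral_def by blast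
qed

lemma bounded_q_on_compact:
  assumes "compact C"
  obtains Q where "\<And>x. x \<in> C \<Longrightarrow> norm (q x) \<le> Q"
proof -
  have "compact (q ` C)"
    using assms continuous_on_subset[OF continuous_q] by (intro compact_continuous_image) auto
  then show ?thesis using that compact_imp_bounded bounded_iff by (metis image_eqI)
qed

lemma continuous_volterra_map:
  assumes w: "continuous_on {0..T} w"
  shows "continuous_on {0..T} (volterra_map y0 w)"
proof -
  obtain Q where Q: "\<And>x. x \<in> w ` {0..T} \<Longrightarrow> norm (q x) \<le> Q"
    using bounded_q_on_compact[OF compact_continuous_image[OF w compact_Icc]] by blast
  have "uniformly_continuous_on {0..T} (volterra_map y0 w)"
    using Q
    by (intro uniformly_continuous_on_sqrt_modulus[where A = "Q + 2 * M * sqrt T" and B = "2 * M * T"]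
        volterra_map_modulus[OF w]) auto
  then show ?thesis by (rule uniformly_continuous_imp_continuous)
qed

lemma bounded_solution_extends_to_closure:
  assumes "T > 0" and sol: "solves y0 y {0..<T}" and bounded: "\<forall>t\<in>{0..<T}. norm (y t - y0) \<le> P"
  obtains ys where "continuous_on {0..T} ys" "\<And>t. t \<in> {0..<T} \<Longrightarrow> ys t = y t"
    "\<And>t. t \<in> {0..T} \<Longrightarrow> ys t = volterra_map y0 ys t"
proof -
  have "solves y0 y {0..<T} \<longleftrightarrow> continuous_on {0..<T} y \<and> (\<forall>t\<in>{0..<T}. y t = volterra_map y0 y t)"
    by (rule solves_iff_fixed_point) auto
  then have y_cont: "continuous_on {0..<T} y" and y_fixed: "\<And>t. t \<in> {0..<T} \<Longrightarrow> y t = volterra_map y0 y t"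
    using sol by auto
  obtain Q where Q: "\<And>x. x \<in> cball y0 P \<Longrightarrow> norm (q x) \<le> Q"
    using bounded_q_on_compact[OF compact_cball] by blast
  have "norm (y t2 - y t1) \<le> sqrt_modulus (Q + 2 * M * sqrt T) (2 * M * T) (t2 - t1)"
    if t: "t1 \<in> {0..<T}" "t2 \<in> {0..<T}" "t1 \<le> t2" for t1 t2
  proof -
    have "norm (y t2 - y t1) = norm (volterra_map y0 y t2 - volterra_map y0 y t1)"
      using y_fixed t by simp
    also have "\<dots> \<le> sqrt_modulus (Q + 2 * M * sqrt t2) (2 * M * t2) (t2 - t1)"
      using t Q bounded
      by (intro volterra_map_modulus continuous_on_subset[OF y_cont])
         (auto simp: dist_norm norm_minus_commute)
    also have "\<dots> \<le> sqrt_modulus (Q + 2 * M * sqrt T) (2 * M * T) (t2 - t1)"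
      using t M_nonneg by (intro sqrt_modulus_mono_coeffs add_left_mono mult_left_mono) auto
    finally show ?thesis .
  qed
  then have uc: "uniformly_continuous_on {0..<T} y" by (rule uniformly_continuous_on_sqrt_modulus)
  have closure: "closure {0..<T} = {0..T}" using \<open>T > 0\<close> by simp
  obtain ys where
    ys_cont: "uniformly_continuous_on {0..T} ys" and ys_eq: "\<And>t. t \<in> {0..<T} \<Longrightarrow> y t = ys t"
    and ys_unique: "\<And>Y g t. {0..<T} \<subseteq> Y \<Longrightarrow> Y \<subseteq> {0..T} \<Longrightarrow> continuous_on Y g \<Longrightarrow>
        (\<And>t. t \<in> {0..<T} \<Longrightarrow> y t = g t) \<Longrightarrow> t \<in> Y \<Longrightarrow> g t = ys t"
    using uniformly_continuous_on_extension_on_closure[OF uc, unfolded closure] by blast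
  have "continuous_on {0..T} ys" using ys_cont by (rule uniformly_continuous_imp_continuous)
  moreover have "volterra_map y0 ys t = ys t" if "t \<in> {0..T}" for t
  proof (rule ys_unique[OF _ order_refl continuous_volterra_map[OF \<open>continuous_on {0..T} ys\<close>]])
    fix s assume s: "s \<in> {0..<T}"
    then have "volterra_map y0 ys s = volterra_map y0 y s" using ys_eq by (intro volterra_map_cong) auto
    then show "y s = volterra_map y0 ys s" using y_fixed[OF s] by simp
  qed (use that in auto)
  ultimately show ?thesis using that ys_eq by auto
qed

end

section \<open>Continuation beyond a bounded solution\<close>

text \<open>\<open>C\<close> contains the unit ball around \<open>ys T\<close>, and the step \<open>h\<close> is so small that the
  retarded map cannot leave that ball on \<open>[T, T + h]\<close> (lemma \<open>admissible_retarded_map\<close>).\<close>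

locale volterra_continuation = weakly_singular_volterra q K M
  for q :: "'a::euclidean_space \<Rightarrow> 'a" and K M +
  fixes y0 :: 'a and ys :: "real \<Rightarrow> 'a" and T h Q :: real and C :: "'a set"
  assumes T_pos: "T > 0"
    and continuous_ys: "continuous_on {0..T} ys"
    and ys_fixed: "\<And>t. t \<in> {0..T} \<Longrightarrow> ys t = volterra_map y0 ys t"
    and compact_C: "compact C"
    and ys_in_C: "ys ` {0..T} \<subseteq> C" and cball_in_C: "cball (ys T) 1 \<subseteq> C"
    and q_le_Q: "\<And>x. x \<in> C \<Longrightarrow> norm (q x) \<le> Q"
    and h_pos: "h > 0" and h_le_1: "h \<le> 1"
    and modulus_h: "sqrt_modulus (Q + 2 * M * sqrt (T + 1)) (2 * M * (T + 1)) h < 1"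
begin

definition \<omega> :: "real \<Rightarrow> real" where
  "\<omega> = sqrt_modulus (Q + 2 * M * sqrt (T + 1)) (2 * M * (T + 1))"

definition admissible :: "(real \<Rightarrow> 'a) \<Rightarrow> bool" where
  "admissible w \<longleftrightarrow> continuous_on {0..T + h} w \<and> (\<forall>t\<in>{0..T}. w t = ys t) \<and>
     (\<forall>t\<in>{T..T + h}. norm (w t - ys T) \<le> 1)"

lemma omega_mono: "0 \<le> d \<Longrightarrow> d \<le> d' \<Longrightarrow> \<omega> d \<le> \<omega> d'"
proof -
  have "ys T \<in> C" using ys_in_C T_pos by auto
  then have "Q \<ge> 0" using q_le_Q norm_ge_zero order_trans by blast
  then show "0 \<le> d \<Longrightarrow> d \<le> d' \<Longrightarrow> \<omega> d \<le> \<omega> d'"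
    unfolding \<omega>_def using M_nonneg T_pos by (intro sqrt_modulus_mono) auto
qed

lemma admissible_in_C: "admissible w \<Longrightarrow> t \<in> {0..T + h} \<Longrightarrow> w t \<in> C"
  using ys_in_C cball_in_C unfolding admissible_def
  by (cases "t \<le> T") (auto simp: dist_norm norm_minus_commute subset_iff)

lemma volterra_map_modulus_admissible:
  assumes w: "admissible w" and s: "s1 \<in> {0..T + h}" "s2 \<in> {0..T + h}"
  shows "norm (volterra_map y0 w s1 - volterra_map y0 w s2) \<le> \<omega> \<bar>s1 - s2\<bar>"
proof -
  have "norm (volterra_map y0 w t2 - volterra_map y0 w t1) \<le> \<omega> (t2 - t1)"
    if t: "t1 \<in> {0..T + h}" "t2 \<in> {0..T + h}" "t1 \<le> t2" for t1 t2
  proof -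
    have "norm (volterra_map y0 w t2 - volterra_map y0 w t1)
        \<le> sqrt_modulus (Q + 2 * M * sqrt (T + h)) (2 * M * (T + h)) (t2 - t1)"
      using w t q_le_Q admissible_in_C[OF w] unfolding admissible_def
      by (intro volterra_map_modulus) auto
    also have "\<dots> \<le> \<omega> (t2 - t1)"
      unfolding \<omega>_def using t h_le_1 h_pos T_pos M_nonneg
      by (intro sqrt_modulus_mono_coeffs add_left_mono mult_left_mono) auto
    finally show ?thesis .
  qed
  from this[of s2 s1] this[of s1 s2] s show ?thesis
    by (cases "s2 \<le> s1") (auto simp: norm_minus_commute)
qed

lemma continuous_volterra_map_admissible:
  assumes "admissible w"
  shows "continuous_on {0..T + h} (volterra_map y0 w)"
  using assms unfolding admissible_def by (intro continuous_volterra_map) auto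

lemma volterra_map_admissible_initial:
  assumes "admissible w" "t \<in> {0..T}"
  shows "volterra_map y0 w t = ys t"
  using assms ys_fixed[of t] volterra_map_cong[of t w ys y0] unfolding admissible_def by auto

definition retard :: "real \<Rightarrow> real \<Rightarrow> real" where
  "retard \<delta> t = max (min t T) (t - \<delta>)"

lemma retard_in_range: "\<delta> > 0 \<Longrightarrow> t \<in> {0..T + h} \<Longrightarrow> retard \<delta> t \<in> {0..T + h}"
  using T_pos unfolding retard_def by auto

lemma retard_close: "\<delta> > 0 \<Longrightarrow> \<bar>retard \<delta> t - t\<bar> \<le> \<delta>"
  unfolding retard_def by auto

lemma retard_initial: "\<delta> > 0 \<Longrightarrow> t \<le> T \<Longrightarrow> retard \<delta> t = t"
  unfolding retard_def by auto

lemma retard_lipschitz: "\<bar>retard \<delta> t1 - retard \<delta> t2\<bar> \<le> \<bar>t1 - t2\<bar>"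
  unfolding retard_def by (auto simp: max_def min_def abs_if)

definition retarded_map :: "real \<Rightarrow> (real \<Rightarrow> 'a) \<Rightarrow> real \<Rightarrow> 'a" where
  "retarded_map \<delta> w t = volterra_map y0 w (retard \<delta> t)"

lemma admissible_retarded_map:
  assumes "\<delta> > 0" "admissible w"
  shows "admissible (retarded_map \<delta> w)"
proof -
  have "continuous_on {0..T + h} (retarded_map \<delta> w)"
    unfolding retarded_map_def retard_def
    by (rule continuous_on_compose2[OF continuous_volterra_map_admissible[OF assms(2)]])
       (use retard_in_range[OF assms(1)] in \<open>auto intro!: continuous_intros simp: retard_def\<close>)
  moreover have "norm (retarded_map \<delta> w t - ys T) \<le> 1" if t: "t \<in> {T..T + h}" for t
  proof -
    have r: "retard \<delta> t \<in> {T..T + h}" using t assms(1) unfolding retard_def by auto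
    have "norm (retarded_map \<delta> w t - ys T) \<le> \<omega> \<bar>retard \<delta> t - T\<bar>"
      using volterra_map_modulus_admissible[OF assms(2), of "retard \<delta> t" T]
        volterra_map_admissible_initial[OF assms(2), of T] r T_pos
      unfolding retarded_map_def by auto
    also have "\<dots> \<le> \<omega> h" using r by (intro omega_mono) auto
    also have "\<dots> < 1" using modulus_h unfolding \<omega>_def .
    finally show ?thesis by simp
  qed
  ultimately show ?thesis
    using volterra_map_admissible_initial[OF assms(2)] retard_initial[OF assms(1)]
    unfolding admissible_def retarded_map_def by auto
qed

definition frozen :: "real \<Rightarrow> 'a" where
  "frozen t = ys (min t T)"

lemma admissible_frozen: "admissible frozen"
proof -
  have "continuous_on {0..T + h} frozen" unfolding frozen_def
    by (rule continuous_on_compose2[OF continuous_ys]) (use T_pos in \<open>auto intro!: continuous_intros\<close>)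
  then show ?thesis unfolding admissible_def frozen_def by auto
qed

text \<open>Method of steps: since \<open>retard \<delta> t \<le> T + k \<delta>\<close> whenever \<open>t \<le> T + (k + 1) \<delta>\<close>, the
  \<open>(k + 1)\<close>-st iterate of the retarded map no longer changes on \<open>[0, T + k \<delta>]\<close>.\<close>

lemma retarded_iterates_stabilize:
  assumes "\<delta> > 0"
  shows "\<forall>t\<in>{0..T + h}. t \<le> T + real k * \<delta> \<longrightarrow>
    (retarded_map \<delta> ^^ Suc k) frozen t = (retarded_map \<delta> ^^ k) frozen t"
proof (induction k)
  case 0
  show ?case using admissible_frozen admissible_retarded_map[OF assms admissible_frozen]
    unfolding admissible_def by auto
next
  case (Suc k)
  show ?case
  proof (intro ballI impI)
    fix t assume t: "t \<in> {0..T + h}" "t \<le> T + real (Suc k) * \<delta>"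
    have "retard \<delta> t \<le> T + real k * \<delta>"
      using t assms unfolding retard_def by (auto simp: algebra_simps min_le_iff_disj)
    then have "volterra_map y0 ((retarded_map \<delta> ^^ Suc k) frozen) (retard \<delta> t)
        = volterra_map y0 ((retarded_map \<delta> ^^ k) frozen) (retard \<delta> t)"
      using Suc.IH retard_in_range[OF assms t(1)] by (intro volterra_map_cong) auto
    then show "(retarded_map \<delta> ^^ Suc (Suc k)) frozen t = (retarded_map \<delta> ^^ Suc k) frozen t"
      by (simp add: retarded_map_def)
  qed
qed

lemma admissible_retarded_iterate: "\<delta> > 0 \<Longrightarrow> admissible ((retarded_map \<delta> ^^ k) frozen)"
  by (induction k) (auto intro: admissible_frozen admissible_retarded_map)

lemma retarded_solution_exists:
  assumes "\<delta> > 0"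
  shows "\<exists>v. admissible v \<and> (\<forall>t\<in>{0..T + h}. v t = volterra_map y0 v (retard \<delta> t))"
proof -
  define k where "k = nat \<lceil>h / \<delta>\<rceil>"
  define v where "v = (retarded_map \<delta> ^^ k) frozen"
  have "h / \<delta> \<le> real k" unfolding k_def by linarith
  then have "h \<le> real k * \<delta>" using assms by (simp add: field_simps)
  then have "retarded_map \<delta> v t = v t" if "t \<in> {0..T + h}" for t
    using retarded_iterates_stabilize[OF assms, of k] that unfolding v_def by auto
  then have "v t = volterra_map y0 v (retard \<delta> t)" if "t \<in> {0..T + h}" for t
    using that unfolding retarded_map_def by metis
  moreover have "admissible v" unfolding v_def by (rule admissible_retarded_iterate[OF assms])
  ultimately show ?thesis by blast
qed

lemma retarded_solution_equicontinuous:
  assumes "\<delta> > 0" "admissible v" "\<forall>t\<in>{0..T + h}. v t = volterra_map y0 v (retard \<delta> t)"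
    and "t \<in> {0..T + h}" "s \<in> {0..T + h}"
  shows "norm (v t - v s) \<le> \<omega> \<bar>t - s\<bar>"
proof -
  have "norm (v t - v s) \<le> \<omega> \<bar>retard \<delta> t - retard \<delta> s\<bar>"
    using assms volterra_map_modulus_admissible[OF assms(2)] retard_in_range[OF assms(1)] by simp
  also have "\<dots> \<le> \<omega> \<bar>t - s\<bar>" by (intro omega_mono retard_lipschitz) auto
  finally show ?thesis .
qed

lemma retarded_solution_defect:
  assumes "\<delta> > 0" "admissible v" "\<forall>t\<in>{0..T + h}. v t = volterra_map y0 v (retard \<delta> t)"
    and "t \<in> {0..T + h}"
  shows "norm (v t - volterra_map y0 v t) \<le> \<omega> \<delta>"
proof -
  have "norm (v t - volterra_map y0 v t) \<le> \<omega> \<bar>retard \<delta> t - t\<bar>"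
    using assms volterra_map_modulus_admissible[OF assms(2)] retard_in_range[OF assms(1)] by simp
  also have "\<dots> \<le> \<omega> \<delta>" by (intro omega_mono retard_close assms(1)) auto
  finally show ?thesis .
qed

lemma retarded_solutions_converge:
  assumes \<delta>_pos: "\<And>n. \<delta> n > 0" and v_adm: "\<And>n. admissible (v n)"
    and v_fixed: "\<And>n. \<forall>t\<in>{0..T + h}. v n t = volterra_map y0 (v n) (retard (\<delta> n) t)"
  shows "\<exists>g k. continuous_on {0..T + h} g \<and> strict_mono (k :: nat \<Rightarrow> nat) \<and>
    (\<forall>t\<in>{0..T + h}. (\<lambda>n. v (k n) t) \<longlonglongrightarrow> g t)"
proof -
  obtain B where B: "\<And>x. x \<in> C \<Longrightarrow> norm x \<le> B"
    using compact_imp_bounded[OF compact_C] bounded_iff by metis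
  obtain g k where "continuous_on {0..T + h} g" "strict_mono (k :: nat \<Rightarrow> nat)"
    and uniform: "\<And>e. 0 < e \<Longrightarrow> \<exists>N. \<forall>n t. n \<ge> N \<and> t \<in> {0..T + h} \<longrightarrow> norm (v (k n) t - g t) < e"
  proof (rule Arzela_Ascoli[of "{0..T + h}" v B])
    show "norm (v n t) \<le> B" if "t \<in> {0..T + h}" for n t using B admissible_in_C[OF v_adm that] by auto
    fix t e assume t: "t \<in> {0..T + h}" and e: "(0::real) < e"
    obtain d where d: "d > 0" "\<And>x. 0 \<le> x \<Longrightarrow> x < d \<Longrightarrow> \<omega> x < e"
      using sqrt_modulus_small[OF e] unfolding \<omega>_def by metis
    have "norm (v n t - v n s) < e" if "s \<in> {0..T + h}" "norm (t - s) < d" for n s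
      using retarded_solution_equicontinuous[OF \<delta>_pos v_adm v_fixed t that(1), of n]
        d(2)[of "\<bar>t - s\<bar>"] that
      by auto
    with d(1) show "\<exists>d>0. \<forall>n s. s \<in> {0..T + h} \<and> norm (t - s) < d \<longrightarrow> norm (v n t - v n s) < e"
      by blast
  qed auto
  moreover have "(\<lambda>n. v (k n) t) \<longlonglongrightarrow> g t" if "t \<in> {0..T + h}" for t
    unfolding LIMSEQ_iff using uniform that by metis
  ultimately show ?thesis by blast
qed

text \<open>Each retarded solution solves the equation up to an error \<open>\<omega> \<delta>\<close>, so the limit of a
  convergent subsequence solves it exactly.\<close>

lemma solution_on_extended_interval:
  obtains g where "continuous_on {0..T + h} g" "\<And>t. t \<in> {0..T + h} \<Longrightarrow> g t = volterra_map y0 g t"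
    "\<And>t. t \<in> {0..T} \<Longrightarrow> g t = ys t"
proof -
  define \<delta> where "\<delta> n = 1 / (real n + 1)" for n
  have \<delta>_pos: "\<delta> n > 0" for n unfolding \<delta>_def by simp
  have "\<forall>n. \<exists>v. admissible v \<and> (\<forall>t\<in>{0..T + h}. v t = volterra_map y0 v (retard (\<delta> n) t))"
    using retarded_solution_exists[OF \<delta>_pos] by blast
  then obtain v where "\<forall>n. admissible (v n) \<and> (\<forall>t\<in>{0..T + h}. v n t = volterra_map y0 (v n) (retard (\<delta> n) t))"
    by metis
  then have v_adm: "\<And>n. admissible (v n)"
    and v_fixed: "\<And>n. \<forall>t\<in>{0..T + h}. v n t = volterra_map y0 (v n) (retard (\<delta> n) t)"
    by blast+
  obtain g k where g_cont: "continuous_on {0..T + h} g" and k: "strict_mono (k :: nat \<Rightarrow> nat)"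
    and g_lim: "\<And>t. t \<in> {0..T + h} \<Longrightarrow> (\<lambda>n. v (k n) t) \<longlonglongrightarrow> g t"
    using retarded_solutions_converge[of \<delta> v, OF \<delta>_pos v_adm v_fixed] by blast
  have g_initial: "g t = ys t" if t: "t \<in> {0..T}" for t
  proof -
    have "(\<lambda>n. v (k n) t) \<longlonglongrightarrow> ys t" using v_adm t unfolding admissible_def by auto
    then show ?thesis using g_lim t h_pos LIMSEQ_unique by fastforce
  qed
  have "g t = volterra_map y0 g t" if t: "t \<in> {0..T + h}" for t
  proof -
    have sub: "{0..t} \<subseteq> {0..T + h}" using t by auto
    have "(\<lambda>n. volterra_map y0 (v (k n)) t) \<longlonglongrightarrow> volterra_map y0 g t"
    proof (rule tendsto_volterra_map)
      show "continuous_on {0..t} (v (k n))" for n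
        using v_adm[of "k n"] sub unfolding admissible_def by (blast intro: continuous_on_subset)
      show "continuous_on {0..t} g" using g_cont sub by (rule continuous_on_subset)
      show "(\<lambda>n. v (k n) \<tau>) \<longlonglongrightarrow> g \<tau>" if "\<tau> \<in> {0..t}" for \<tau> using g_lim sub that by auto
      show "norm (q (v (k n) \<tau>)) \<le> Q" if "\<tau> \<in> {0..t}" for n \<tau>
        using q_le_Q admissible_in_C[OF v_adm] sub that by auto
    qed
    moreover have "(\<lambda>n. v (k n) t - volterra_map y0 (v (k n)) t) \<longlonglongrightarrow> 0"
    proof (rule Lim_null_comparison)
      show "\<forall>\<^sub>F n in sequentially. norm (v (k n) t - volterra_map y0 (v (k n)) t) \<le> \<omega> (\<delta> (k n))"
        using retarded_solution_defect[OF \<delta>_pos v_adm v_fixed t] by simp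
      have "(\<delta> \<circ> k) \<longlonglongrightarrow> 0"
        using LIMSEQ_subseq_LIMSEQ[OF LIMSEQ_inverse_real_of_nat k]
        by (simp add: \<delta>_def o_def inverse_eq_divide add.commute)
      then show "(\<lambda>n. \<omega> (\<delta> (k n))) \<longlonglongrightarrow> 0"
        unfolding \<omega>_def by (intro tendsto_sqrt_modulus_zero) (simp add: o_def)
    qed
    ultimately have "(\<lambda>n. v (k n) t) \<longlonglongrightarrow> volterra_map y0 g t" by (rule Lim_transform)
    then show ?thesis using g_lim[OF t] LIMSEQ_unique by blast
  qed
  with g_cont g_initial that show ?thesis by blast
qed

end

context weakly_singular_volterra
begin

lemma continuation_beyond:
  assumes "T > 0" and ys: "continuous_on {0..T} ys" "\<And>t. t \<in> {0..T} \<Longrightarrow> ys t = volterra_map y0 ys t"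
  obtains T' g where "T' > T" "continuous_on {0..T'} g" "\<And>t. t \<in> {0..T'} \<Longrightarrow> g t = volterra_map y0 g t"
    "\<And>t. t \<in> {0..T} \<Longrightarrow> g t = ys t"
proof -
  define C where "C = ys ` {0..T} \<union> cball (ys T) 1"
  have "compact C" unfolding C_def by (intro compact_Un compact_continuous_image ys(1)) auto
  then obtain Q where Q: "\<And>x. x \<in> C \<Longrightarrow> norm (q x) \<le> Q" using bounded_q_on_compact by blast
  obtain d where d: "d > 0" "\<And>x. 0 \<le> x \<Longrightarrow> x < d \<Longrightarrow> sqrt_modulus (Q + 2 * M * sqrt (T + 1)) (2 * M * (T + 1)) x < 1"
    using sqrt_modulus_small[of 1] by auto
  define h where "h = min 1 (d / 2)"
  interpret volterra_continuation q K M y0 ys T h Q C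
    using assms \<open>compact C\<close> Q d unfolding C_def h_def by unfold_locales auto
  show ?thesis
  proof (rule solution_on_extended_interval)
    fix g assume "continuous_on {0..T + h} g" "\<And>t. t \<in> {0..T + h} \<Longrightarrow> g t = volterra_map y0 g t"
      "\<And>t. t \<in> {0..T} \<Longrightarrow> g t = ys t"
    with h_pos show ?thesis by (intro that[of "T + h" g]) auto
  qed
qed

theorem bounded_solution_continues:
  assumes "T > 0" and "solves y0 y {0..<T}" and "\<forall>t\<in>{0..<T}. norm (y t - y0) \<le> P"
  shows "\<exists>T' > T. \<exists>z. solves y0 z {0..T'} \<and> (\<forall>t\<in>{0..<T}. z t = y t)"
proof -
  obtain ys where ys: "continuous_on {0..T} ys" "\<And>t. t \<in> {0..<T} \<Longrightarrow> ys t = y t"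
    "\<And>t. t \<in> {0..T} \<Longrightarrow> ys t = volterra_map y0 ys t"
    using bounded_solution_extends_to_closure[OF assms] by blast
  obtain T' g where g: "T' > T" "continuous_on {0..T'} g" "\<And>t. t \<in> {0..T'} \<Longrightarrow> g t = volterra_map y0 g t"
    "\<And>t. t \<in> {0..T} \<Longrightarrow> g t = ys t"
    using continuation_beyond[OF \<open>T > 0\<close> ys(1,3)] by blast
  have "solves y0 g {0..T'}" using g(2,3) by (subst solves_iff_fixed_point) auto
  moreover have "\<forall>t\<in>{0..<T}. g t = y t" using g(4) ys(2) by simp
  ultimately show ?thesis using \<open>T' > T\<close> by blast
qed

end

section \<open>The kernel of equation (E)\<close>

lemma continuous_qE:
  assumes "R > 0"
  shows "continuous_on UNIV (qE \<beta> \<sigma> R :: 'n::finite state \<Rightarrow> 'n state)"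
proof -
  have "1 + x^2 / R^2 \<noteq> 0" for x :: real
  proof -
    have "0 \<le> x^2 / R^2" by (intro divide_nonneg_nonneg) auto
    then show ?thesis by linarith
  qed
  then show ?thesis unfolding qE_def[abs_def] by (intro continuous_intros) (use assms in auto)
qed

lemma continuous_on_pcomp:
  assumes "D > 0" "continuous_on S r" "continuous_on S a" "continuous_on S b"
    and "\<And>p. p \<in> S \<Longrightarrow> r p > 0"
  shows "continuous_on S (\<lambda>p. pcomp D R (r p) (a p) (b p))"
proof -
  have "continuous_on {p::real \<times> real \<times> real. fst p > 0} (\<lambda>p. integral (cbox (-R) R) (\<lambda>w.
      exp (- ((snd (snd p) - w)^2 / (4 * fst p * D))) *
      (exp (- ((fst (snd p) - sqrt (R^2 - w^2))^2 / (4 * fst p * D)))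
       - exp (- ((fst (snd p) + sqrt (R^2 - w^2))^2 / (4 * fst p * D))))))"
    by (rule integral_continuous_on_param) (use assms in \<open>auto intro!: continuous_intros simp: split_beta\<close>)
  then have "continuous_on {p. fst p > 0} (\<lambda>p. pcomp D R (fst p) (fst (snd p)) (snd (snd p)))"
    unfolding pcomp_def by simp
  then have "continuous_on S (\<lambda>p. (\<lambda>p. pcomp D R (fst p) (fst (snd p)) (snd (snd p))) (r p, a p, b p))"
    by (rule continuous_on_compose2) (use assms in \<open>auto intro!: continuous_intros\<close>)
  then show ?thesis by simp
qed

lemma continuous_kernel_E:
  assumes "D > 0"
  shows "continuous_on ({0<..} \<times> UNIV) (\<lambda>(r, x, z). CE \<gamma> \<xi> \<eta> D r *\<^sub>R pE D R r (x::'n::finite state) z)"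
proof -
  define S where "S = ({0<..} \<times> UNIV :: (real \<times> 'n state \<times> 'n state) set)"
  have pos: "\<And>p. p \<in> S \<Longrightarrow> fst p > 0" unfolding S_def by auto
  have pcomp_entry: "continuous_on S (\<lambda>p. pcomp D R (fst p)
      ((snd (fst (snd p)) $ i - snd (snd (snd p)) $ j) $ l) ((snd (fst (snd p)) $ i - snd (snd (snd p)) $ j) $ m))"
    for i j and l m :: 2
    using pos by (intro continuous_on_pcomp[OF assms] continuous_intros) auto
  have entries: "continuous_on S (\<lambda>p. if k = 1
      then pcomp D R (fst p) ((snd (fst (snd p)) $ i - snd (snd (snd p)) $ j) $ 1) ((snd (fst (snd p)) $ i - snd (snd (snd p)) $ j) $ 2)
      else pcomp D R (fst p) ((snd (fst (snd p)) $ i - snd (snd (snd p)) $ j) $ 2) ((snd (fst (snd p)) $ i - snd (snd (snd p)) $ j) $ 1))"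
    for i j and k :: 2
    using pcomp_entry[of i j 1 2] pcomp_entry[of i j 2 1] by (cases "k = 1") simp_all
  have "continuous_on S (\<lambda>p. CE \<gamma> \<xi> \<eta> D (fst p))"
    unfolding CE_def using pos assms by (intro continuous_intros) (auto, fastforce)
  then have "continuous_on S (\<lambda>p. CE \<gamma> \<xi> \<eta> D (fst p) *\<^sub>R pE D R (fst p) (fst (snd p)) (snd (snd p)))"
    unfolding pE_def
    by (intro continuous_on_scaleR continuous_on_Pair continuous_on_vec_lambda continuous_on_sum
        entries continuous_on_const)
  then show ?thesis unfolding S_def by (simp add: case_prod_beta)
qed

lemma exp_neg_le_inverse: "(u::real) \<ge> 0 \<Longrightarrow> exp (- u) \<le> 1 / (1 + u)"
  using le_imp_inverse_le[OF exp_ge_add_one_self[of u]] by (simp add: exp_minus inverse_eq_divide)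

lemma has_integral_lorentzian:
  fixes a b c x :: real
  assumes "c > 0" "a \<le> b"
  shows "((\<lambda>w. 1 / (1 + (x - w)^2 / c)) has_integral
           sqrt c * (arctan ((x - a) / sqrt c) - arctan ((x - b) / sqrt c))) {a..b}"
proof -
  define H where "H w = - sqrt c * arctan ((x - w) / sqrt c)" for w
  have "((\<lambda>w. 1 / (1 + (x - w)^2 / c)) has_integral (H b - H a)) {a..b}"
  proof (rule fundamental_theorem_of_calculus[OF \<open>a \<le> b\<close>])
    fix w
    have "(H has_real_derivative (- sqrt c * (inverse (1 + ((x - w) / sqrt c)^2) * ((0 - 1) / sqrt c))))
        (at w within {a..b})"
      unfolding H_def using assms
      by (auto intro!: derivative_eq_intros simp: power2_eq_square abs_of_pos mult.assoc)
    moreover have "- sqrt c * (inverse (1 + ((x - w) / sqrt c)^2) * ((0 - 1) / sqrt c))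
        = 1 / (1 + (x - w)^2 / c)"
    proof -
      have "((x - w) / sqrt c)^2 = (x - w)^2 / c" using assms by (simp add: power_divide)
      moreover have "- sqrt c * (X * ((0 - 1) / sqrt c)) = X" for X using assms by simp
      ultimately show ?thesis by (simp add: inverse_eq_divide)
    qed
    ultimately show "(H has_vector_derivative 1 / (1 + (x - w)^2 / c)) (at w within {a..b})"
      by (simp add: has_real_derivative_iff_has_vector_derivative)
  qed
  then show ?thesis unfolding H_def by (simp add: algebra_simps)
qed

text \<open>The difference of the two Gaussians in \<open>a\<close> is at most \<open>1\<close> in absolute value, and the
  Gaussian in \<open>b\<close> is dominated by a Lorentzian whose integral over \<open>\<real>\<close> is \<open>pi sqrt (4 r D)\<close>.\<close>

lemma abs_pcomp_le:
  assumes "D > 0" "r > 0" "R > 0"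
  shows "\<bar>pcomp D R r a b\<bar> \<le> pi * sqrt (4 * r * D)"
proof -
  define c where "c = 4 * r * D"
  have c: "c > 0" unfolding c_def using assms by auto
  define F where "F w = exp (- ((b - w)^2 / c)) *
      (exp (- ((a - sqrt (R^2 - w^2))^2 / c)) - exp (- ((a + sqrt (R^2 - w^2))^2 / c)))" for w
  note lorentzian = has_integral_lorentzian[where a = "-R" and b = R and c = c and x = b, OF c]
  have "norm (F w) \<le> 1 / (1 + (b - w)^2 / c)" for w
  proof -
    have "0 < exp (- ((a - sqrt (R^2 - w^2))^2 / c))" "exp (- ((a - sqrt (R^2 - w^2))^2 / c)) \<le> 1"
      "0 < exp (- ((a + sqrt (R^2 - w^2))^2 / c))" "exp (- ((a + sqrt (R^2 - w^2))^2 / c)) \<le> 1"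
      using c by auto
    then have "\<bar>exp (- ((a - sqrt (R^2 - w^2))^2 / c)) - exp (- ((a + sqrt (R^2 - w^2))^2 / c))\<bar> \<le> 1"
      by linarith
    then have "norm (F w) \<le> exp (- ((b - w)^2 / c))"
      unfolding F_def by (simp add: abs_mult mult_left_le)
    also have "\<dots> \<le> 1 / (1 + (b - w)^2 / c)" using c by (intro exp_neg_le_inverse) simp
    finally show ?thesis .
  qed
  moreover have "F integrable_on {-R..R}"
    unfolding F_def by (rule integrable_continuous_interval) (use c in \<open>intro continuous_intros; auto\<close>)
  ultimately have "norm (integral {-R..R} F) \<le> integral {-R..R} (\<lambda>w. 1 / (1 + (b - w)^2 / c))"
    using lorentzian assms by (intro integral_norm_bound_integral) auto
  also have "\<dots> = sqrt c * (arctan ((b + R) / sqrt c) - arctan ((b - R) / sqrt c))"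
    using lorentzian assms by (simp add: integral_unique)
  also have "\<dots> \<le> sqrt c * pi"
    using arctan_bounded[of "(b + R) / sqrt c"] arctan_bounded[of "(b - R) / sqrt c"] c
    by (intro mult_left_mono) auto
  finally show ?thesis unfolding pcomp_def F_def c_def by (simp add: mult.commute)
qed

lemma norm_nested_vec_le: "norm (v :: real ^ 'm ^ 'n) \<le> (\<Sum>i\<in>UNIV. \<Sum>k\<in>UNIV. \<bar>v $ i $ k\<bar>)"
proof -
  have "norm v \<le> (\<Sum>i\<in>UNIV. norm (v $ i))"
    unfolding norm_vec_def by (rule L2_set_le_sum) auto
  also have "\<dots> \<le> (\<Sum>i\<in>UNIV. \<Sum>k\<in>UNIV. \<bar>v $ i $ k\<bar>)"
    by (intro sum_mono norm_le_l1_cart)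
  finally show ?thesis .
qed

lemma CE_times_pcomp_bound_le:
  assumes "D > 0" "r > 0" "\<gamma> > 0" "\<xi> > 0" "\<eta> > 0"
  shows "CE \<gamma> \<xi> \<eta> D r * (pi * sqrt (4 * r * D)) \<le> \<gamma> * \<xi> / (2 * sqrt D) / sqrt r"
proof -
  have sqrt_pos: "sqrt r > 0" "sqrt D > 0" using assms by auto
  have sqrt_4rD: "sqrt (4 * r * D) = 2 * sqrt r * sqrt D" by (simp add: real_sqrt_mult)
  have r: "r = sqrt r * sqrt r" and D: "D = sqrt D * sqrt D" using assms by simp_all
  have "CE \<gamma> \<xi> \<eta> D r * (pi * sqrt (4 * r * D)) = \<gamma> * \<xi> * exp (- \<eta> * r) / (2 * sqrt D) / sqrt r"
    unfolding CE_def sqrt_4rD using sqrt_pos pi_gt_zero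
    by (subst (1 2) r, subst (1 2) D) (simp add: field_simps)
  also have "\<dots> \<le> \<gamma> * \<xi> * 1 / (2 * sqrt D) / sqrt r"
    using assms sqrt_pos by (intro divide_right_mono mult_left_mono) auto
  finally show ?thesis by simp
qed

lemma norm_pE_le:
  assumes "D > 0" "r > 0" "R > 0"
  shows "norm (pE D R r (x::'n::finite state) z)
    \<le> real CARD('n) * real CARD('n) * 2 * (pi * sqrt (4 * r * D))"
proof -
  define V :: "real^2^'n" where "V = (\<chi> i. \<chi> k. \<Sum>j\<in>UNIV.
         (if k = 1 then pcomp D R r ((snd x $ i - snd z $ j) $ 1) ((snd x $ i - snd z $ j) $ 2)
          else pcomp D R r ((snd x $ i - snd z $ j) $ 2) ((snd x $ i - snd z $ j) $ 1)))"
  have "\<bar>V $ i $ k\<bar> \<le> real CARD('n) * (pi * sqrt (4 * r * D))" for i k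
  proof -
    have "\<bar>V $ i $ k\<bar> \<le> (\<Sum>j\<in>(UNIV::'n set). \<bar>(if k = 1 then pcomp D R r ((snd x $ i - snd z $ j) $ 1) ((snd x $ i - snd z $ j) $ 2)
          else pcomp D R r ((snd x $ i - snd z $ j) $ 2) ((snd x $ i - snd z $ j) $ 1))\<bar>)"
      unfolding V_def by simp
    also have "\<dots> \<le> (\<Sum>j\<in>(UNIV::'n set). pi * sqrt (4 * r * D))"
      by (intro sum_mono) (auto simp: abs_pcomp_le[OF assms])
    finally show ?thesis by simp
  qed
  then have "(\<Sum>i\<in>UNIV. \<Sum>k\<in>UNIV. \<bar>V $ i $ k\<bar>)
      \<le> (\<Sum>i\<in>(UNIV::'n set). \<Sum>k\<in>(UNIV::2 set). real CARD('n) * (pi * sqrt (4 * r * D)))"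
    by (intro sum_mono)
  then have "norm V \<le> real CARD('n) * real CARD('n) * 2 * (pi * sqrt (4 * r * D))"
    using norm_nested_vec_le[of V] by (simp add: algebra_simps)
  moreover have "pE D R r x z = (V, 0)" unfolding pE_def V_def by simp
  ultimately show ?thesis by (simp add: norm_Pair)
qed

lemma norm_kernel_E_le:
  assumes "D > 0" "R > 0" "\<gamma> > 0" "\<xi> > 0" "\<eta> > 0" "r \<ge> 0"
  shows "norm (CE \<gamma> \<xi> \<eta> D r *\<^sub>R pE D R r (x::'n::finite state) z)
     \<le> (real CARD('n) * real CARD('n) * (\<gamma> * \<xi> / sqrt D)) / sqrt r"
proof (cases "r = 0")
  case True then show ?thesis by (simp add: CE_def)
next
  case False
  then have r: "r > 0" using assms by auto
  have CE_nonneg: "CE \<gamma> \<xi> \<eta> D r \<ge> 0" unfolding CE_def using assms r by auto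
  have "norm (CE \<gamma> \<xi> \<eta> D r *\<^sub>R pE D R r x z) = CE \<gamma> \<xi> \<eta> D r * norm (pE D R r x z)"
    using CE_nonneg by simp
  also have "\<dots> \<le> CE \<gamma> \<xi> \<eta> D r * (real CARD('n) * real CARD('n) * 2 * (pi * sqrt (4 * r * D)))"
    using norm_pE_le[OF \<open>D > 0\<close> r \<open>R > 0\<close>] CE_nonneg by (rule mult_left_mono)
  also have "\<dots> = real CARD('n) * real CARD('n) * 2 * (CE \<gamma> \<xi> \<eta> D r * (pi * sqrt (4 * r * D)))"
    by (simp add: algebra_simps)
  also have "\<dots> \<le> real CARD('n) * real CARD('n) * 2 * (\<gamma> * \<xi> / (2 * sqrt D) / sqrt r)"
    using CE_times_pcomp_bound_le[OF \<open>D > 0\<close> r assms(3-5)] by (intro mult_left_mono) auto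
  also have "\<dots> = (real CARD('n) * real CARD('n) * (\<gamma> * \<xi> / sqrt D)) / sqrt r"
    by (simp add: field_simps)
  finally show ?thesis .
qed

theorem proposition4p1:
  fixes \<beta> \<sigma> \<gamma> \<xi> \<eta> D R T P :: real
    and y0 :: "'n::finite state"
    and y :: "real \<Rightarrow> 'n state"
  assumes "\<beta> > 0" "\<sigma> > 0" "\<gamma> > 0" "\<xi> > 0" "\<eta> > 0" "D > 0" "R > 0"
    and "T > 0"
    and "solves_E \<beta> \<sigma> \<gamma> \<xi> \<eta> D R y0 y {0..<T}"
    and "\<forall>t\<in>{0..<T}. norm (y t - y0) \<le> P"
  shows "\<exists>Tbar > T. \<exists>z :: real \<Rightarrow> 'n state.
           solves_E \<beta> \<sigma> \<gamma> \<xi> \<eta> D R y0 z {0..Tbar} \<and> (\<forall>t\<in>{0..<T}. z t = y t)"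
proof -
  interpret E: weakly_singular_volterra "qE \<beta> \<sigma> R :: 'n state \<Rightarrow> 'n state"
    "\<lambda>r x z. CE \<gamma> \<xi> \<eta> D r *\<^sub>R pE D R r x z" "real CARD('n) * real CARD('n) * (\<gamma> * \<xi> / sqrt D)"
    using assms continuous_qE continuous_kernel_E norm_kernel_E_le by unfold_locales auto
  have "solves_E \<beta> \<sigma> \<gamma> \<xi> \<eta> D R y0 w J = E.solves y0 w J" for w J
    unfolding solves_E_def E.solves_def by simp
  then show ?thesis using E.bounded_solution_continues[OF assms(8)] assms(9,10) by auto
qed

end
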